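(* Let $s,t\geq0$ with $s\neq1+\delta/\gamma$ and $s+t>1+\delta/\gamma$. Then there is $c>0$ such that for all $b>0$ and $a\geq0$ $$\int_{\mathbb{R}^d}\frac{|v(\xi)|^2}{(a+\omega(\xi))^s(b+\omega(\xi))^t}\mathrm{d}\xi\leq c\,(a+1)^{-(s-1-\delta/\gamma)_+}\,b^{-\min\{s+t-1-\delta/\gamma,\,t\}}.$$
   Context: Standing assumptions: $d\in\mathbb{N}$; $v:\mathbb{R}^d\to\mathbb{R}$, $\omega,\Omega:\mathbb{R}^d\to[0,\infty)$ rotation invariant; $\alpha<d/2$, $\gamma\in\{1,2\}$, $\delta:=d-2\alpha-\gamma<\gamma$; constants $C>0,c_b>0,c_p\geq0$ with $\Omega\in C^\gamma$, $|v(k)|\leq C|k|^{-\alpha}$, $\omega(k)\geq C(c_b+k^2)^{\gamma/2}$, $\Omega(p)\geq C(c_p+p^2)^{\gamma/2}$, $|\partial^\nu\Omega(p)|\leq C(c_p+p^2)^{(\gamma-|\nu|)/2}$ for $|\nu|\in\{1,\gamma\}$. $x_+:=\max\{x,0\}$. *)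

theory Defs
  imports "HOL-Analysis.Analysis"
begin

end

theory Submission
  imports Defs
begin

(* Let kappa = 1 + delta/gamma = (d - 2 alpha)/gamma. Since |v|^2 <= C^2 |xi|^(-2 alpha) and
   omega >= K (1 + |xi|^gamma), the integrand is dominated by a multiple of a weight
   |xi|^(-beta) (L + |xi|^gamma)^(-p); the substitution xi = L^(1/gamma) eta shows that the
   integral of this weight is L^((d - beta)/gamma - p) times its value at L = 1, which is finite
   when beta < d < beta + gamma p.
   If s > kappa, take beta = 2 alpha, p = s, L = a + 1, and use (b + omega)^(-t) <= b^(-t).
   If s < kappa, use (a + omega)^(-s) <= (K |xi|^gamma)^(-s) and take beta = 2 alpha + gamma s,
   p = t, L = b + 1; then (b + 1)^(kappa - s - t) <= b^(kappa - s - t). *)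

lemma nn_integral_lborel_scaleR:
  fixes f :: "'a::euclidean_space \<Rightarrow> ennreal"
  assumes [measurable]: "f \<in> borel_measurable borel" and "c > 0"
  shows "(\<integral>\<^sup>+x. f x \<partial>lborel) = ennreal (c ^ DIM('a)) * (\<integral>\<^sup>+x. f (c *\<^sub>R x) \<partial>lborel)"
  using \<open>c > 0\<close>
  by (subst lborel_affine[of c 0]) (simp_all add: nn_integral_density nn_integral_distr nn_integral_cmult)

lemma AE_lborel_inner_Basis_nonzero:
  "AE x in (lborel :: 'a::euclidean_space measure). \<forall>b\<in>Basis. x \<bullet> b \<noteq> 0"
proof (rule AE_finite_allI[OF finite_Basis])
  fix b :: 'a assume "b \<in> Basis"
  then have "negligible {x::'a. b \<bullet> x = 0}"
    by (intro negligible_hyperplane) auto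
  then have "AE x in lebesgue. x \<notin> {x::'a. b \<bullet> x = 0}"
    by (intro AE_not_in) (simp add: negligible_iff_null_sets)
  then show "AE x in lborel. x \<bullet> b \<noteq> 0"
    by (simp add: AE_completion_iff inner_commute)
qed

lemma nn_integral_mono_cmult_AE:
  assumes "AE x in M. f x \<le> c * g x" and "0 \<le> c" and "g \<in> borel_measurable M"
  shows "(\<integral>\<^sup>+x. ennreal (f x) \<partial>M) \<le> ennreal c * (\<integral>\<^sup>+x. ennreal (g x) \<partial>M)"
proof -
  have "(\<integral>\<^sup>+x. ennreal (f x) \<partial>M) \<le> (\<integral>\<^sup>+x. ennreal c * ennreal (g x) \<partial>M)"
    using assms(1) by (rule nn_integral_mono_AE[OF AE_mp])
      (auto simp: \<open>0 \<le> c\<close> ennreal_leI simp flip: ennreal_mult')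
  also have "\<dots> = ennreal c * (\<integral>\<^sup>+x. ennreal (g x) \<partial>M)"
    using assms(3) by (intro nn_integral_cmult) simp
  finally show ?thesis .
qed

lemma nn_integral_comp_abs_finite:
  fixes f :: "real \<Rightarrow> real"
  assumes [measurable]: "f \<in> borel_measurable borel"
    and "(\<integral>\<^sup>+x. ennreal (f x) * indicator {0..} x \<partial>lborel) < \<infinity>"
  shows "(\<integral>\<^sup>+x. ennreal (f \<bar>x\<bar>) \<partial>lborel) < \<infinity>"
proof -
  define g where "g x = ennreal (f x) * indicator {0..} x" for x
  have [measurable]: "g \<in> borel_measurable borel"
    unfolding g_def by measurable
  have "(\<integral>\<^sup>+x. ennreal (f \<bar>x\<bar>) \<partial>lborel) \<le> (\<integral>\<^sup>+x. g x + g (- x) \<partial>lborel)"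
    by (intro nn_integral_mono) (auto simp: g_def indicator_def)
  also have "\<dots> = (\<integral>\<^sup>+x. g x \<partial>lborel) + (\<integral>\<^sup>+x. g (- x) \<partial>lborel)"
    by (intro nn_integral_add) auto
  also have "(\<integral>\<^sup>+x. g (- x) \<partial>lborel) = (\<integral>\<^sup>+x. g x \<partial>lborel)"
    using nn_integral_real_affine[of g "-1" 0] by simp
  finally show ?thesis
    using assms(2) by (simp add: g_def order_le_less_trans)
qed

lemma nn_integral_abs_powr_near_0_finite:
  fixes \<theta> :: real
  assumes "0 \<le> \<theta>" and "\<theta> < 1"
  shows "(\<integral>\<^sup>+x. ennreal (indicator {..1} \<bar>x\<bar> * \<bar>x\<bar> powr (- \<theta>)) \<partial>lborel) < \<infinity>"
proof (rule nn_integral_comp_abs_finite[where f = "\<lambda>x. indicator {..1} x * x powr (- \<theta>)"])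
  have "((\<lambda>x. x powr (- \<theta>)) has_integral (1 powr (1 - \<theta>) / (1 - \<theta>))) {0..1}"
    using has_integral_powr_from_0[of "- \<theta>" 1] assms by simp
  then have "(\<integral>\<^sup>+x. ennreal (x powr (- \<theta>)) * indicator {0..1} x \<partial>lborel) < \<infinity>"
    by (subst nn_integral_has_integral_lebesgue') auto
  moreover have "ennreal (indicator {..1} x * x powr (- \<theta>)) * indicator {0..} x
      = ennreal (x powr (- \<theta>)) * indicator {0..1} x" for x :: real
    by (auto simp: indicator_def)
  ultimately show "(\<integral>\<^sup>+x. ennreal (indicator {..1} x * x powr (- \<theta>)) * indicator {0..} x \<partial>lborel) < \<infinity>"
    by simp
qed measurable

lemma nn_integral_max_1_abs_powr_finite:
  fixes r :: real
  assumes "1 < r"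
  shows "(\<integral>\<^sup>+x. ennreal (max 1 \<bar>x\<bar> powr (- r)) \<partial>lborel) < \<infinity>"
proof (rule nn_integral_comp_abs_finite[where f = "\<lambda>x. max 1 x powr (- r)"])
  have "((\<lambda>x. x powr (- r)) has_integral (- (1 powr (1 - r)) / (1 - r))) {1..}"
    using has_integral_powr_to_inf[of "- r" 1] assms by simp
  then have tail: "(\<integral>\<^sup>+x. ennreal (x powr (- r)) * indicator {1..} x \<partial>lborel) < \<infinity>"
    by (subst nn_integral_has_integral_lebesgue') auto
  have "ennreal (max 1 x powr (- r)) * indicator {0..} x
      \<le> indicator {0..1} x + ennreal (x powr (- r)) * indicator {1..} x" for x :: real
    by (auto simp: indicator_def)
  then have "(\<integral>\<^sup>+x. ennreal (max 1 x powr (- r)) * indicator {0..} x \<partial>lborel)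
      \<le> (\<integral>\<^sup>+x. indicator {0..1} x + ennreal (x powr (- r)) * indicator {1..} x \<partial>lborel)"
    by (intro nn_integral_mono)
  also have "\<dots> = emeasure lborel {0..1::real} + (\<integral>\<^sup>+x. ennreal (x powr (- r)) * indicator {1..} x \<partial>lborel)"
    by (subst nn_integral_add) auto
  also have "\<dots> < \<infinity>"
    using tail by simp
  finally show "(\<integral>\<^sup>+x. ennreal (max 1 x powr (- r)) * indicator {0..} x \<partial>lborel) < \<infinity>" .
qed measurable

lemma norm_powr_eq_prod_Basis:
  fixes \<eta> :: "'a::euclidean_space" and x :: real
  assumes "\<eta> \<noteq> 0"
  shows "norm \<eta> powr (x * DIM('a)) = (\<Prod>b\<in>(Basis :: 'a set). norm \<eta> powr x)"
  using assms by (simp add: powr_realpow[symmetric] powr_powr mult.commute)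

lemma power_weight_le_prod_near_0:
  fixes \<eta> :: "'a::euclidean_space" and \<beta> \<gamma> p \<theta> :: real
  assumes nz: "\<forall>b\<in>Basis. \<eta> \<bullet> b \<noteq> 0" and "norm \<eta> \<le> 1"
    and "0 \<le> \<theta>" and "\<beta> \<le> \<theta> * DIM('a)" and "0 \<le> p"
  shows "norm \<eta> powr (- \<beta>) * (1 + norm \<eta> powr \<gamma>) powr (- p)
    \<le> (\<Prod>b\<in>Basis. indicator {..1} \<bar>\<eta> \<bullet> b\<bar> * \<bar>\<eta> \<bullet> b\<bar> powr (- \<theta>))"
proof -
  have "\<eta> \<noteq> 0"
    using nz SOME_Basis by force
  have "(1 + norm \<eta> powr \<gamma>) powr (- p) \<le> 1"
    using assms powr_mono2'[of "- p" 1 "1 + norm \<eta> powr \<gamma>"] by simp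
  then have "norm \<eta> powr (- \<beta>) * (1 + norm \<eta> powr \<gamma>) powr (- p) \<le> norm \<eta> powr (- \<beta>)"
    by (intro mult_left_le) auto
  also have "\<dots> \<le> norm \<eta> powr ((- \<theta>) * DIM('a))"
    using assms \<open>\<eta> \<noteq> 0\<close> by (intro powr_mono') auto
  also have "\<dots> \<le> (\<Prod>b\<in>Basis. indicator {..1} \<bar>\<eta> \<bullet> b\<bar> * \<bar>\<eta> \<bullet> b\<bar> powr (- \<theta>))"
    unfolding norm_powr_eq_prod_Basis[OF \<open>\<eta> \<noteq> 0\<close>]
  proof (rule prod_mono)
    fix b :: 'a assume "b \<in> Basis"
    then have "\<bar>\<eta> \<bullet> b\<bar> \<le> norm \<eta>" and "\<eta> \<bullet> b \<noteq> 0"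
      using nz by (auto simp: Basis_le_norm)
    then show "0 \<le> norm \<eta> powr (- \<theta>) \<and>
        norm \<eta> powr (- \<theta>) \<le> indicator {..1} \<bar>\<eta> \<bullet> b\<bar> * \<bar>\<eta> \<bullet> b\<bar> powr (- \<theta>)"
      using assms by (auto intro!: powr_mono2')
  qed
  finally show ?thesis .
qed

lemma power_weight_le_prod_far:
  fixes \<eta> :: "'a::euclidean_space" and \<beta> \<gamma> p r :: real
  assumes "1 < norm \<eta>" and "0 \<le> r" and "r * DIM('a) \<le> \<beta> + \<gamma> * p" and "0 \<le> p"
  shows "norm \<eta> powr (- \<beta>) * (1 + norm \<eta> powr \<gamma>) powr (- p)
    \<le> (\<Prod>b\<in>Basis. max 1 \<bar>\<eta> \<bullet> b\<bar> powr (- r))"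
proof -
  have "\<eta> \<noteq> 0"
    using assms(1) by auto
  have "(1 + norm \<eta> powr \<gamma>) powr (- p) \<le> (norm \<eta> powr \<gamma>) powr (- p)"
    using assms \<open>\<eta> \<noteq> 0\<close> by (intro powr_mono2') auto
  then have "norm \<eta> powr (- \<beta>) * (1 + norm \<eta> powr \<gamma>) powr (- p)
      \<le> norm \<eta> powr (- \<beta>) * (norm \<eta> powr \<gamma>) powr (- p)"
    by (intro mult_left_mono) auto
  also have "\<dots> = norm \<eta> powr (- (\<beta> + \<gamma> * p))"
    by (simp add: powr_powr flip: powr_add)
  also have "\<dots> \<le> norm \<eta> powr ((- r) * DIM('a))"
    using assms by (intro powr_mono) auto
  also have "\<dots> \<le> (\<Prod>b\<in>Basis. max 1 \<bar>\<eta> \<bullet> b\<bar> powr (- r))"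
    unfolding norm_powr_eq_prod_Basis[OF \<open>\<eta> \<noteq> 0\<close>]
  proof (rule prod_mono)
    fix b :: 'a assume "b \<in> Basis"
    then have "\<bar>\<eta> \<bullet> b\<bar> \<le> norm \<eta>"
      by (rule Basis_le_norm)
    then show "0 \<le> norm \<eta> powr (- r) \<and> norm \<eta> powr (- r) \<le> max 1 \<bar>\<eta> \<bullet> b\<bar> powr (- r)"
      using assms by (auto intro!: powr_mono2')
  qed
  finally show ?thesis .
qed

(* Dominating the weight by two tensor products reduces its integrability on R^d to two
   one-dimensional integrals, so no polar coordinates are needed. *)
lemma power_weight_le_sum_prod:
  fixes \<eta> :: "'a::euclidean_space" and \<beta> \<gamma> p \<theta> r :: real
  assumes "\<forall>b\<in>Basis. \<eta> \<bullet> b \<noteq> 0" and "0 \<le> \<theta>" and "\<beta> \<le> \<theta> * DIM('a)"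
    and "0 \<le> r" and "r * DIM('a) \<le> \<beta> + \<gamma> * p" and "0 \<le> p"
  shows "norm \<eta> powr (- \<beta>) * (1 + norm \<eta> powr \<gamma>) powr (- p)
    \<le> (\<Prod>b\<in>Basis. indicator {..1} \<bar>\<eta> \<bullet> b\<bar> * \<bar>\<eta> \<bullet> b\<bar> powr (- \<theta>))
      + (\<Prod>b\<in>Basis. max 1 \<bar>\<eta> \<bullet> b\<bar> powr (- r))"
    (is "?w \<le> ?P\<^sub>0 + ?P\<^sub>1")
proof -
  have "0 \<le> ?P\<^sub>0" and "0 \<le> ?P\<^sub>1"
    by (auto intro!: prod_nonneg)
  moreover have "?w \<le> ?P\<^sub>0 \<or> ?w \<le> ?P\<^sub>1"
  proof (cases "norm \<eta> \<le> 1")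
    case True
    with assms show ?thesis
      by (intro disjI1 power_weight_le_prod_near_0) auto
  next
    case False
    with assms show ?thesis
      by (intro disjI2 power_weight_le_prod_far) auto
  qed
  ultimately show ?thesis
    by linarith
qed

lemma nn_integral_power_weight_finite:
  fixes \<beta> \<gamma> p :: real
  assumes "\<beta> < DIM('a)" and "DIM('a) < \<beta> + \<gamma> * p" and "0 \<le> p"
  shows "(\<integral>\<^sup>+\<eta>. ennreal (norm \<eta> powr (- \<beta>) * (1 + norm \<eta> powr \<gamma>) powr (- p))
    \<partial>(lborel :: 'a::euclidean_space measure)) < \<infinity>"
proof -
  define \<theta> where "\<theta> = max \<beta> 0 / DIM('a)"
  define r where "r = (\<beta> + \<gamma> * p) / DIM('a)"
  have \<theta>: "0 \<le> \<theta>" "\<theta> < 1" "\<beta> \<le> \<theta> * DIM('a)"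
    using assms(1) by (auto simp: \<theta>_def field_simps)
  have r: "1 < r" "r * DIM('a) \<le> \<beta> + \<gamma> * p"
    using assms(2) by (auto simp: r_def field_simps)
  define \<psi>\<^sub>0 where "\<psi>\<^sub>0 x = indicator {..1} \<bar>x\<bar> * \<bar>x\<bar> powr (- \<theta>)" for x :: real
  define \<psi>\<^sub>1 where "\<psi>\<^sub>1 x = max 1 \<bar>x\<bar> powr (- r)" for x :: real
  have [measurable]: "\<psi>\<^sub>0 \<in> borel_measurable borel" "\<psi>\<^sub>1 \<in> borel_measurable borel"
    unfolding \<psi>\<^sub>0_def \<psi>\<^sub>1_def by measurable
  have \<psi>_nonneg: "0 \<le> \<psi>\<^sub>0 x" "0 \<le> \<psi>\<^sub>1 x" for x
    by (auto simp: \<psi>\<^sub>0_def \<psi>\<^sub>1_def)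
  have "AE \<eta> in (lborel :: 'a measure). ennreal (norm \<eta> powr (- \<beta>) * (1 + norm \<eta> powr \<gamma>) powr (- p))
      \<le> (\<Prod>b\<in>Basis. ennreal (\<psi>\<^sub>0 (\<eta> \<bullet> b))) + (\<Prod>b\<in>Basis. ennreal (\<psi>\<^sub>1 (\<eta> \<bullet> b)))"
    using AE_lborel_inner_Basis_nonzero
  proof eventually_elim
    case (elim \<eta>)
    have "norm \<eta> powr (- \<beta>) * (1 + norm \<eta> powr \<gamma>) powr (- p)
      \<le> (\<Prod>b\<in>Basis. \<psi>\<^sub>0 (\<eta> \<bullet> b)) + (\<Prod>b\<in>Basis. \<psi>\<^sub>1 (\<eta> \<bullet> b))"
      unfolding \<psi>\<^sub>0_def \<psi>\<^sub>1_def by (rule power_weight_le_sum_prod) (use elim \<theta> r assms(3) in auto)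
    then show ?case
      by (simp add: \<psi>\<^sub>0_def \<psi>\<^sub>1_def \<psi>_nonneg prod_ennreal prod_nonneg ennreal_leI flip: ennreal_plus)
  qed
  then have "(\<integral>\<^sup>+\<eta>. ennreal (norm \<eta> powr (- \<beta>) * (1 + norm \<eta> powr \<gamma>) powr (- p)) \<partial>(lborel :: 'a measure))
      \<le> (\<integral>\<^sup>+\<eta>. (\<Prod>b\<in>Basis. ennreal (\<psi>\<^sub>0 (\<eta> \<bullet> b))) + (\<Prod>b\<in>Basis. ennreal (\<psi>\<^sub>1 (\<eta> \<bullet> b))) \<partial>(lborel :: 'a measure))"
    by (rule nn_integral_mono_AE)
  also have "\<dots> = (\<Prod>b\<in>(Basis :: 'a set). \<integral>\<^sup>+x. ennreal (\<psi>\<^sub>0 x) \<partial>lborel)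
      + (\<Prod>b\<in>(Basis :: 'a set). \<integral>\<^sup>+x. ennreal (\<psi>\<^sub>1 x) \<partial>lborel)"
    by (simp add: nn_integral_add nn_integral_lborel_prod[where f = "\<lambda>_. \<psi>\<^sub>0"]
        nn_integral_lborel_prod[where f = "\<lambda>_. \<psi>\<^sub>1"] \<psi>_nonneg)
  also have "\<dots> < \<infinity>"
    using nn_integral_abs_powr_near_0_finite[OF \<theta>(1,2)] nn_integral_max_1_abs_powr_finite[OF r(1)]
    by (simp add: \<psi>\<^sub>0_def \<psi>\<^sub>1_def less_top[symmetric] power_eq_top_ennreal)
  finally show ?thesis .
qed

lemma nn_integral_power_weight_scale:
  fixes L \<beta> \<gamma> p :: real
  assumes "0 < L" and "0 < \<gamma>"
  shows "(\<integral>\<^sup>+\<xi>. ennreal (norm \<xi> powr (- \<beta>) * (L + norm \<xi> powr \<gamma>) powr (- p)) \<partial>(lborel :: 'a::euclidean_space measure))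
    = ennreal (L powr ((DIM('a) - \<beta>) / \<gamma> - p)) *
      (\<integral>\<^sup>+\<eta>. ennreal (norm \<eta> powr (- \<beta>) * (1 + norm \<eta> powr \<gamma>) powr (- p)) \<partial>(lborel :: 'a measure))"
proof -
  define W where "W M \<xi> = norm \<xi> powr (- \<beta>) * (M + norm \<xi> powr \<gamma>) powr (- p)" for M and \<xi> :: 'a
  define c where "c = L powr (1 / \<gamma>)"
  have c: "0 < c" "c powr \<gamma> = L"
    using assms by (simp_all add: c_def powr_powr)
  have "L + norm (c *\<^sub>R \<eta>) powr \<gamma> = L * (1 + norm \<eta> powr \<gamma>)" for \<eta> :: 'a
    using c by (simp add: powr_mult distrib_left)
  then have W_scale: "ennreal (W L (c *\<^sub>R \<eta>)) = ennreal (c powr (- \<beta>) * L powr (- p)) * ennreal (W 1 \<eta>)" for \<eta>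
    using c assms(1) by (simp add: W_def powr_mult ennreal_mult' mult_ac)
  have c_DIM: "c ^ DIM('a) * (c powr (- \<beta>) * L powr (- p)) = L powr ((DIM('a) - \<beta>) / \<gamma> - p)"
  proof -
    have "c ^ DIM('a) * (c powr (- \<beta>) * L powr (- p)) = L powr (DIM('a) / \<gamma>) * (L powr (- \<beta> / \<gamma>) * L powr (- p))"
      using c by (simp add: c_def powr_realpow[symmetric] powr_powr)
    also have "\<dots> = L powr ((DIM('a) - \<beta>) / \<gamma> - p)"
      by (simp flip: powr_add) (rule arg_cong[where f = "(powr) L"], simp add: diff_divide_distrib)
    finally show ?thesis .
  qed
  have W_measurable: "(\<lambda>\<eta>. ennreal (W M \<eta>)) \<in> borel_measurable borel" for M
    unfolding W_def by measurable
  have "(\<integral>\<^sup>+\<xi>. ennreal (W L \<xi>) \<partial>lborel) = ennreal (c ^ DIM('a)) * (\<integral>\<^sup>+\<eta>. ennreal (W L (c *\<^sub>R \<eta>)) \<partial>lborel)"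
    using c(1) W_measurable by (rule nn_integral_lborel_scaleR[rotated])
  also have "\<dots> = ennreal (c ^ DIM('a)) * (ennreal (c powr (- \<beta>) * L powr (- p)) * (\<integral>\<^sup>+\<eta>. ennreal (W 1 \<eta>) \<partial>lborel))"
    unfolding W_scale by (subst nn_integral_cmult) (simp_all add: W_measurable)
  also have "\<dots> = ennreal (L powr ((DIM('a) - \<beta>) / \<gamma> - p)) * (\<integral>\<^sup>+\<eta>. ennreal (W 1 \<eta>) \<partial>lborel)"
    using c(1) by (simp add: ennreal_mult mult.assoc flip: c_DIM)
  finally show ?thesis
    by (simp only: W_def)
qed

lemma nn_integral_power_weight:
  fixes \<beta> \<gamma> p :: real
  assumes "\<beta> < DIM('a)" and "DIM('a) < \<beta> + \<gamma> * p" and "0 \<le> p" and "0 < \<gamma>"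
  obtains G where "0 \<le> G" and "\<And>L. 0 < L \<Longrightarrow>
    (\<integral>\<^sup>+\<xi>. ennreal (norm \<xi> powr (- \<beta>) * (L + norm \<xi> powr \<gamma>) powr (- p)) \<partial>(lborel :: 'a::euclidean_space measure))
      = ennreal (G * L powr ((DIM('a) - \<beta>) / \<gamma> - p))"
proof
  let ?I = "\<integral>\<^sup>+\<eta>. ennreal (norm \<eta> powr (- \<beta>) * (1 + norm \<eta> powr \<gamma>) powr (- p)) \<partial>(lborel :: 'a measure)"
  show "0 \<le> enn2real ?I"
    by simp
  fix L :: real assume "0 < L"
  let ?e = "(DIM('a) - \<beta>) / \<gamma> - p"
  have "(\<integral>\<^sup>+\<xi>. ennreal (norm \<xi> powr (- \<beta>) * (L + norm \<xi> powr \<gamma>) powr (- p)) \<partial>(lborel :: 'a measure))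
      = ennreal (L powr ?e) * ?I"
    using \<open>0 < L\<close> assms(4) by (rule nn_integral_power_weight_scale)
  also have "\<dots> = ennreal (L powr ?e) * ennreal (enn2real ?I)"
    using nn_integral_power_weight_finite[OF assms(1-3)] by simp
  also have "\<dots> = ennreal (enn2real ?I * L powr ?e)"
    by (simp only: ennreal_mult'[OF powr_ge_zero, symmetric] mult.commute)
  finally show "(\<integral>\<^sup>+\<xi>. ennreal (norm \<xi> powr (- \<beta>) * (L + norm \<xi> powr \<gamma>) powr (- p)) \<partial>(lborel :: 'a measure))
      = ennreal (enn2real ?I * L powr ?e)" .
qed

lemma one_add_powr_le:
  fixes x \<gamma> :: real
  assumes "0 \<le> x" and "0 < \<gamma>"
  shows "1 + x powr \<gamma> \<le> 2 * (1 + x\<^sup>2) powr (\<gamma> / 2)"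
proof -
  have "x powr \<gamma> = (x\<^sup>2) powr (\<gamma> / 2)"
    using assms by (cases "x = 0") (simp_all add: powr_powr flip: powr_numeral)
  also have "\<dots> \<le> (1 + x\<^sup>2) powr (\<gamma> / 2)"
    using assms by (intro powr_mono2) auto
  finally show ?thesis
    using ge_one_powr_ge_zero[of "1 + x\<^sup>2" "\<gamma> / 2"] assms by simp
qed

lemma lower_bound_one_add_norm_powr:
  fixes \<omega> :: "'a::real_normed_vector \<Rightarrow> real" and C c\<^sub>b \<gamma> :: real
  assumes "0 < C" and "0 < c\<^sub>b" and "0 < \<gamma>"
    and \<omega>_ge: "\<And>k. C * (c\<^sub>b + (norm k)\<^sup>2) powr (\<gamma> / 2) \<le> \<omega> k"
  obtains K where "0 < K" and "K \<le> 1" and "\<And>k. K * (1 + norm k powr \<gamma>) \<le> \<omega> k"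
proof
  define m where "m = min c\<^sub>b 1"
  have m: "0 < m" "m \<le> c\<^sub>b" "m \<le> 1"
    using assms by (auto simp: m_def)
  let ?K = "min 1 (C * m powr (\<gamma> / 2) / 2)"
  show "0 < ?K" "?K \<le> 1"
    using assms m by auto
  fix k :: 'a
  have "m * (1 + (norm k)\<^sup>2) \<le> c\<^sub>b + (norm k)\<^sup>2"
    using m mult_left_le_one_le[of "(norm k)\<^sup>2" m] by (simp add: distrib_left)
  then have powr_m_le: "m powr (\<gamma> / 2) * (1 + (norm k)\<^sup>2) powr (\<gamma> / 2) \<le> (c\<^sub>b + (norm k)\<^sup>2) powr (\<gamma> / 2)"
    using m assms by (simp add: powr_mono2 flip: powr_mult)
  have "?K * (1 + norm k powr \<gamma>) \<le> C * m powr (\<gamma> / 2) / 2 * (1 + norm k powr \<gamma>)"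
    by (intro mult_right_mono) (auto simp: add_nonneg_nonneg)
  also have "\<dots> \<le> C * m powr (\<gamma> / 2) / 2 * (2 * (1 + (norm k)\<^sup>2) powr (\<gamma> / 2))"
    using assms by (intro mult_left_mono one_add_powr_le) auto
  also have "\<dots> = C * (m powr (\<gamma> / 2) * (1 + (norm k)\<^sup>2) powr (\<gamma> / 2))"
    by simp
  also have "\<dots> \<le> C * (c\<^sub>b + (norm k)\<^sup>2) powr (\<gamma> / 2)"
    using powr_m_le \<open>0 < C\<close> by (intro mult_left_mono) auto
  also have "\<dots> \<le> \<omega> k"
    by (rule \<omega>_ge)
  finally show "?K * (1 + norm k powr \<gamma>) \<le> \<omega> k" .
qed

lemma add_powr_neg_le:
  fixes x w K \<rho> p :: real
  assumes "0 \<le> x" and "0 < K" and "K \<le> 1" and "0 \<le> \<rho>" and "K * (1 + \<rho>) \<le> w" and "0 \<le> p"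
  shows "(x + w) powr (- p) \<le> K powr (- p) * (x + 1 + \<rho>) powr (- p)"
proof -
  have "K * (x + 1 + \<rho>) \<le> x + w"
    using assms mult_left_le_one_le[of x K] by (simp add: algebra_simps)
  then have "(x + w) powr (- p) \<le> (K * (x + 1 + \<rho>)) powr (- p)"
    using assms by (intro powr_mono2') auto
  also have "\<dots> = K powr (- p) * (x + 1 + \<rho>) powr (- p)"
    using assms by (simp add: powr_mult)
  finally show ?thesis .
qed

lemma divide_powr_mult_powr_le:
  fixes u U P Q P' Q' s t :: real
  assumes "u \<le> U" and "0 \<le> U" and "0 < P" and "0 < Q"
    and "P powr (- s) \<le> P'" and "Q powr (- t) \<le> Q'"
  shows "u / (P powr s * Q powr t) \<le> U * P' * Q'"
proof -
  have "u / (P powr s * Q powr t) = u * P powr (- s) * Q powr (- t)"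
    using assms by (simp add: powr_minus field_simps)
  also have "\<dots> \<le> U * P' * Q'"
    using assms by (intro mult_mono mult_nonneg_nonneg) (auto intro: order.trans[OF powr_ge_zero])
  finally show ?thesis .
qed

context
  fixes u \<omega> :: "'a::euclidean_space \<Rightarrow> real" and M K \<beta> \<gamma> :: real
  assumes u_le: "\<And>\<xi>. \<xi> \<noteq> 0 \<Longrightarrow> u \<xi> \<le> M * norm \<xi> powr (- \<beta>)"
    and \<omega>_ge: "\<And>\<xi>. K * (1 + norm \<xi> powr \<gamma>) \<le> \<omega> \<xi>"
    and M_nonneg: "0 \<le> M" and K_pos: "0 < K" and K_le_1: "K \<le> 1"
    and \<gamma>_pos: "0 < \<gamma>" and \<beta>_lt: "\<beta> < DIM('a)"
begin

lemma \<omega>_pos: "0 < \<omega> \<xi>"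
proof -
  have "0 < K * (1 + norm \<xi> powr \<gamma>)"
    using K_pos by (simp add: add_pos_nonneg)
  then show ?thesis
    using \<omega>_ge by (rule order.strict_trans2)
qed

lemma integrand_le_large_exponent:
  assumes "\<xi> \<noteq> 0" and "0 \<le> a" and "0 < b" and "0 \<le> s" and "0 \<le> t"
  shows "u \<xi> / ((a + \<omega> \<xi>) powr s * (b + \<omega> \<xi>) powr t)
    \<le> M * K powr (- s) * b powr (- t) * (norm \<xi> powr (- \<beta>) * (a + 1 + norm \<xi> powr \<gamma>) powr (- s))"
proof -
  have "(a + \<omega> \<xi>) powr (- s) \<le> K powr (- s) * (a + 1 + norm \<xi> powr \<gamma>) powr (- s)"
    using assms K_pos K_le_1 \<omega>_ge by (intro add_powr_neg_le) auto
  moreover have "(b + \<omega> \<xi>) powr (- t) \<le> b powr (- t)"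
    using assms \<omega>_pos[of \<xi>] by (intro powr_mono2') auto
  ultimately have "u \<xi> / ((a + \<omega> \<xi>) powr s * (b + \<omega> \<xi>) powr t)
      \<le> M * norm \<xi> powr (- \<beta>) * (K powr (- s) * (a + 1 + norm \<xi> powr \<gamma>) powr (- s)) * b powr (- t)"
    using u_le assms M_nonneg \<omega>_pos[of \<xi>] by (intro divide_powr_mult_powr_le) auto
  then show ?thesis
    by (simp only: mult_ac)
qed

lemma integrand_le_small_exponent:
  assumes "\<xi> \<noteq> 0" and "0 \<le> a" and "0 < b" and "0 \<le> s" and "0 \<le> t"
  shows "u \<xi> / ((a + \<omega> \<xi>) powr s * (b + \<omega> \<xi>) powr t)
    \<le> M * K powr (- s) * K powr (- t) * (norm \<xi> powr (- (\<beta> + \<gamma> * s)) * (b + 1 + norm \<xi> powr \<gamma>) powr (- t))"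
proof -
  have "K * norm \<xi> powr \<gamma> \<le> a + \<omega> \<xi>"
    using \<omega>_ge[of \<xi>] K_pos assms by (simp add: distrib_left)
  then have "(a + \<omega> \<xi>) powr (- s) \<le> (K * norm \<xi> powr \<gamma>) powr (- s)"
    using assms K_pos by (intro powr_mono2') auto
  also have "\<dots> = K powr (- s) * norm \<xi> powr (- (\<gamma> * s))"
    using K_pos by (simp add: powr_mult powr_powr)
  finally have "(a + \<omega> \<xi>) powr (- s) \<le> K powr (- s) * norm \<xi> powr (- (\<gamma> * s))" .
  moreover have "(b + \<omega> \<xi>) powr (- t) \<le> K powr (- t) * (b + 1 + norm \<xi> powr \<gamma>) powr (- t)"
    using assms K_pos K_le_1 \<omega>_ge by (intro add_powr_neg_le) auto
  ultimately have "u \<xi> / ((a + \<omega> \<xi>) powr s * (b + \<omega> \<xi>) powr t)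
      \<le> M * norm \<xi> powr (- \<beta>) * (K powr (- s) * norm \<xi> powr (- (\<gamma> * s)))
          * (K powr (- t) * (b + 1 + norm \<xi> powr \<gamma>) powr (- t))"
    using u_le assms M_nonneg \<omega>_pos[of \<xi>] by (intro divide_powr_mult_powr_le) auto
  also have "\<dots> = M * K powr (- s) * K powr (- t)
      * (norm \<xi> powr (- \<beta>) * norm \<xi> powr (- (\<gamma> * s)) * (b + 1 + norm \<xi> powr \<gamma>) powr (- t))"
    by (simp only: mult_ac)
  also have "\<dots> = M * K powr (- s) * K powr (- t)
      * (norm \<xi> powr (- (\<beta> + \<gamma> * s)) * (b + 1 + norm \<xi> powr \<gamma>) powr (- t))"
    by (simp only: minus_add_distrib powr_add)
  finally show ?thesis .
qed

lemma nn_integral_le_large_exponent: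
  assumes "0 \<le> s" and "0 \<le> t" and "(DIM('a) - \<beta>) / \<gamma> < s"
  shows "\<exists>c>0. \<forall>b>0. \<forall>a\<ge>0.
    (\<integral>\<^sup>+\<xi>. ennreal (u \<xi> / ((a + \<omega> \<xi>) powr s * (b + \<omega> \<xi>) powr t)) \<partial>lborel)
      \<le> ennreal (c * (a + 1) powr ((DIM('a) - \<beta>) / \<gamma> - s) * b powr (- t))"
proof -
  have "DIM('a) < \<beta> + \<gamma> * s"
    using assms(3) \<gamma>_pos by (simp add: divide_less_eq algebra_simps)
  from nn_integral_power_weight[OF \<beta>_lt this assms(1) \<gamma>_pos]
  obtain G where G: "0 \<le> G" and G_eq: "\<And>L. 0 < L \<Longrightarrow>
      (\<integral>\<^sup>+\<xi>. ennreal (norm \<xi> powr (- \<beta>) * (L + norm \<xi> powr \<gamma>) powr (- s)) \<partial>(lborel :: 'a measure))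
        = ennreal (G * L powr ((DIM('a) - \<beta>) / \<gamma> - s))"
    by blast
  let ?c = "M * K powr (- s) * G + 1"
  show ?thesis
  proof (intro exI[of _ ?c] conjI allI impI)
    show "0 < ?c"
      using M_nonneg G by (simp add: add_nonneg_pos)
    fix b a :: real assume "0 < b" and "0 \<le> a"
    let ?X = "M * K powr (- s) * b powr (- t)"
    have "AE \<xi> in lborel. u \<xi> / ((a + \<omega> \<xi>) powr s * (b + \<omega> \<xi>) powr t)
        \<le> ?X * (norm \<xi> powr (- \<beta>) * (a + 1 + norm \<xi> powr \<gamma>) powr (- s))"
      using AE_lborel_singleton[of 0] by (rule eventually_mono)
        (intro integrand_le_large_exponent; use assms \<open>0 \<le> a\<close> \<open>0 < b\<close> in simp)
    then have "(\<integral>\<^sup>+\<xi>. ennreal (u \<xi> / ((a + \<omega> \<xi>) powr s * (b + \<omega> \<xi>) powr t)) \<partial>lborel)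
        \<le> ennreal ?X * ennreal (G * (a + 1) powr ((DIM('a) - \<beta>) / \<gamma> - s))"
      using \<open>0 \<le> a\<close> M_nonneg by (subst G_eq[symmetric]) (auto intro!: nn_integral_mono_cmult_AE)
    also have "\<dots> \<le> ennreal (?c * (a + 1) powr ((DIM('a) - \<beta>) / \<gamma> - s) * b powr (- t))"
      using M_nonneg G by (simp add: ennreal_mult'[symmetric] ennreal_leI algebra_simps)
    finally show "(\<integral>\<^sup>+\<xi>. ennreal (u \<xi> / ((a + \<omega> \<xi>) powr s * (b + \<omega> \<xi>) powr t)) \<partial>lborel)
        \<le> ennreal (?c * (a + 1) powr ((DIM('a) - \<beta>) / \<gamma> - s) * b powr (- t))" .
  qed
qed

lemma nn_integral_le_small_exponent:
  assumes "0 \<le> s" and "0 \<le> t" and "s < (DIM('a) - \<beta>) / \<gamma>" and "(DIM('a) - \<beta>) / \<gamma> < s + t"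
  shows "\<exists>c>0. \<forall>b>0. \<forall>a\<ge>0.
    (\<integral>\<^sup>+\<xi>. ennreal (u \<xi> / ((a + \<omega> \<xi>) powr s * (b + \<omega> \<xi>) powr t)) \<partial>lborel)
      \<le> ennreal (c * b powr ((DIM('a) - \<beta>) / \<gamma> - s - t))"
proof -
  let ?e = "(DIM('a) - \<beta>) / \<gamma> - s - t"
  have e_eq: "(DIM('a) - (\<beta> + \<gamma> * s)) / \<gamma> - t = ?e"
    using \<gamma>_pos by (simp add: field_simps)
  have "\<beta> + \<gamma> * s < DIM('a)" and "DIM('a) < \<beta> + \<gamma> * s + \<gamma> * t"
    using assms(3,4) \<gamma>_pos by (simp_all add: less_divide_eq divide_less_eq algebra_simps)
  from nn_integral_power_weight[OF this assms(2) \<gamma>_pos]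
  obtain G where G: "0 \<le> G" and G_eq: "\<And>L. 0 < L \<Longrightarrow>
      (\<integral>\<^sup>+\<xi>. ennreal (norm \<xi> powr (- (\<beta> + \<gamma> * s)) * (L + norm \<xi> powr \<gamma>) powr (- t)) \<partial>(lborel :: 'a measure))
        = ennreal (G * L powr ?e)"
    unfolding e_eq by blast
  let ?c = "M * K powr (- s) * K powr (- t) * G + 1"
  show ?thesis
  proof (intro exI[of _ ?c] conjI allI impI)
    show "0 < ?c"
      using M_nonneg G by (simp add: add_nonneg_pos)
    fix b a :: real assume "0 < b" and "0 \<le> a"
    let ?X = "M * K powr (- s) * K powr (- t)"
    have "AE \<xi> in lborel. u \<xi> / ((a + \<omega> \<xi>) powr s * (b + \<omega> \<xi>) powr t)
        \<le> ?X * (norm \<xi> powr (- (\<beta> + \<gamma> * s)) * (b + 1 + norm \<xi> powr \<gamma>) powr (- t))"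
      using AE_lborel_singleton[of 0] by (rule eventually_mono)
        (intro integrand_le_small_exponent; use assms \<open>0 \<le> a\<close> \<open>0 < b\<close> in simp)
    then have "(\<integral>\<^sup>+\<xi>. ennreal (u \<xi> / ((a + \<omega> \<xi>) powr s * (b + \<omega> \<xi>) powr t)) \<partial>lborel)
        \<le> ennreal ?X * ennreal (G * (b + 1) powr ?e)"
      using \<open>0 < b\<close> M_nonneg by (subst G_eq[symmetric]) (auto intro!: nn_integral_mono_cmult_AE)
    also have "\<dots> = ennreal (?X * (G * (b + 1) powr ?e))"
      using M_nonneg by (simp add: ennreal_mult')
    also have "\<dots> \<le> ennreal (?c * b powr ?e)"
    proof (rule ennreal_leI)
      have "?e < 0"
        using assms(4) by simp
      then have "(b + 1) powr ?e \<le> b powr ?e"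
        using \<open>0 < b\<close> by (intro powr_mono2') auto
      then have "?X * G * (b + 1) powr ?e \<le> ?X * G * b powr ?e"
        using M_nonneg G by (intro mult_left_mono) auto
      also have "\<dots> \<le> ?c * b powr ?e"
        by (intro mult_right_mono) auto
      finally show "?X * (G * (b + 1) powr ?e) \<le> ?c * b powr ?e"
        by (simp only: mult.assoc)
    qed
    finally show "(\<integral>\<^sup>+\<xi>. ennreal (u \<xi> / ((a + \<omega> \<xi>) powr s * (b + \<omega> \<xi>) powr t)) \<partial>lborel)
        \<le> ennreal (?c * b powr ?e)" .
  qed
qed

lemma nn_integral_le_weighted:
  fixes \<delta> s t :: real
  assumes \<delta>_eq: "\<delta> = DIM('a) - \<beta> - \<gamma>" and "0 \<le> s" and "0 \<le> t"
    and s_ne: "s \<noteq> 1 + \<delta> / \<gamma>" and st_gt: "1 + \<delta> / \<gamma> < s + t"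
  shows "\<exists>c>0. \<forall>b>0. \<forall>a\<ge>0.
    (\<integral>\<^sup>+\<xi>. ennreal (u \<xi> / ((a + \<omega> \<xi>) powr s * (b + \<omega> \<xi>) powr t)) \<partial>lborel)
      \<le> ennreal (c * (a + 1) powr (- max (s - 1 - \<delta> / \<gamma>) 0) * b powr (- min (s + t - 1 - \<delta> / \<gamma>) t))"
proof -
  have \<kappa>: "(DIM('a) - \<beta>) / \<gamma> = 1 + \<delta> / \<gamma>"
    using \<gamma>_pos by (simp add: \<delta>_eq field_simps)
  consider "1 + \<delta> / \<gamma> < s" | "s < 1 + \<delta> / \<gamma>"
    using s_ne by linarith
  then show ?thesis
  proof cases
    case 1
    then have "(DIM('a) - \<beta>) / \<gamma> - s = - max (s - 1 - \<delta> / \<gamma>) 0"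
      and "- t = - min (s + t - 1 - \<delta> / \<gamma>) t"
      using \<open>0 \<le> t\<close> unfolding \<kappa> by auto
    with nn_integral_le_large_exponent[OF \<open>0 \<le> s\<close> \<open>0 \<le> t\<close>] 1 show ?thesis
      unfolding \<kappa> by (simp only:)
  next
    case 2
    then obtain c where "0 < c" and c: "\<And>b a. 0 < b \<Longrightarrow> 0 \<le> a \<Longrightarrow>
        (\<integral>\<^sup>+\<xi>. ennreal (u \<xi> / ((a + \<omega> \<xi>) powr s * (b + \<omega> \<xi>) powr t)) \<partial>lborel)
          \<le> ennreal (c * b powr ((DIM('a) - \<beta>) / \<gamma> - s - t))"
      using nn_integral_le_small_exponent[OF \<open>0 \<le> s\<close> \<open>0 \<le> t\<close>] st_gt unfolding \<kappa> by blast
    have e: "(DIM('a) - \<beta>) / \<gamma> - s - t = - min (s + t - 1 - \<delta> / \<gamma>) t"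
      using 2 unfolding \<kappa> by auto
    show ?thesis
    proof (intro exI[of _ c] conjI allI impI \<open>0 < c\<close>)
      fix b a :: real assume "0 < b" and "0 \<le> a"
      moreover have "(a + 1) powr (- max (s - 1 - \<delta> / \<gamma>) 0) = 1"
        using 2 \<open>0 \<le> a\<close> by simp
      ultimately show "(\<integral>\<^sup>+\<xi>. ennreal (u \<xi> / ((a + \<omega> \<xi>) powr s * (b + \<omega> \<xi>) powr t)) \<partial>lborel)
          \<le> ennreal (c * (a + 1) powr (- max (s - 1 - \<delta> / \<gamma>) 0) * b powr (- min (s + t - 1 - \<delta> / \<gamma>) t))"
        using c unfolding e by simp
    qed
  qed
qed

end

theorem lemmaA1:
  fixes v :: "real ^ 'n \<Rightarrow> real" and \<omega> :: "real ^ 'n \<Rightarrow> real"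
    and \<alpha> \<gamma> C c\<^sub>b s t :: real
  defines "\<delta> \<equiv> real CARD('n) - 2 * \<alpha> - \<gamma>"
  assumes v_rot: "\<And>f k. orthogonal_transformation f \<Longrightarrow> v (f k) = v k"
    and \<omega>_rot: "\<And>f k. orthogonal_transformation f \<Longrightarrow> \<omega> (f k) = \<omega> k"
    and \<omega>_nonneg: "\<And>k. \<omega> k \<ge> 0"
    and \<alpha>_lt: "\<alpha> < real CARD('n) / 2"
    and \<gamma>_cases: "\<gamma> = 1 \<or> \<gamma> = 2"
    and \<delta>_lt: "\<delta> < \<gamma>"
    and C_pos: "C > 0" and cb_pos: "c\<^sub>b > 0"
    and v_bound: "\<And>k. k \<noteq> 0 \<Longrightarrow> \<bar>v k\<bar> \<le> C * norm k powr (- \<alpha>)"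
    and \<omega>_bound: "\<And>k. \<omega> k \<ge> C * (c\<^sub>b + (norm k)\<^sup>2) powr (\<gamma> / 2)"
    and s_nonneg: "s \<ge> 0" and t_nonneg: "t \<ge> 0"
    and s_ne: "s \<noteq> 1 + \<delta> / \<gamma>"
    and st_gt: "s + t > 1 + \<delta> / \<gamma>"
  shows "\<exists>c>0. \<forall>b>0. \<forall>a\<ge>0.
    (\<integral>\<^sup>+ \<xi>. ennreal ((v \<xi>)\<^sup>2 / ((a + \<omega> \<xi>) powr s * (b + \<omega> \<xi>) powr t)) \<partial>lborel)
      \<le> ennreal (c * (a + 1) powr (- max (s - 1 - \<delta> / \<gamma>) 0)
                   * b powr (- min (s + t - 1 - \<delta> / \<gamma>) t))"
proof -
  have \<gamma>_pos: "0 < \<gamma>"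
    using \<gamma>_cases by auto
  obtain K where K: "0 < K" "K \<le> 1" and \<omega>_ge: "\<And>k. K * (1 + norm k powr \<gamma>) \<le> \<omega> k"
    using lower_bound_one_add_norm_powr[OF C_pos cb_pos \<gamma>_pos] \<omega>_bound by blast
  have v_sq: "(v \<xi>)\<^sup>2 \<le> C\<^sup>2 * norm \<xi> powr (- (2 * \<alpha>))" if "\<xi> \<noteq> 0" for \<xi>
  proof -
    have "\<bar>v \<xi>\<bar>\<^sup>2 \<le> (C * norm \<xi> powr (- \<alpha>))\<^sup>2"
      using v_bound[OF that] by (intro power_mono) auto
    then show ?thesis
      using that by (simp add: power_mult_distrib powr_power)
  qed
  show ?thesis
    by (rule nn_integral_le_weighted[where u = "\<lambda>\<xi>. (v \<xi>)\<^sup>2"])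
      (fact v_sq \<omega>_ge zero_le_power2 K \<gamma>_pos s_nonneg t_nonneg s_ne st_gt | use \<alpha>_lt in \<open>simp add: \<delta>_def\<close>)+
qed

end
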